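(* Let $H_A$ and $H_B$ be finite-dimensional Hilbert spaces with $n=\dim H_A$, and let $|\phi\rangle,|\psi\rangle\in H_A\otimes H_B$ be unit vectors such that $\langle\phi|\psi\rangle$ is a real positive number. Let $s,t>0$ with $s+t=1$, $s\le t$ and $\sqrt{s/t}\ge\langle\phi|\psi\rangle$. Then there exist an orthonormal basis $\{|i\rangle\}_{i=1}^n$ of $H_A$, nonnegative reals $s_i,t_i$ and unit vectors $|\eta_i\rangle,|\gamma_i\rangle\in H_B$ ($i=1,\dots,n$) such that $$|\phi\rangle=\sum_{i=1}^n\sqrt{s_i}\,|i\rangle|\eta_i\rangle,\qquad |\psi\rangle=\sum_{i=1}^n\sqrt{t_i}\,|i\rangle|\gamma_i\rangle,$$ and for every $i=1,\dots,n$: $\langle\eta_i|\gamma_i\rangle$ is real, $s\,s_i\le t\,t_i$, and $\sqrt{s\,s_i}\ge\sqrt{t\,t_i}\,\langle\eta_i|\gamma_i\rangle$ (i.e. $\sqrt{s s_i/(t t_i)}\ge\langle\eta_i|\gamma_i\rangle$ whenever $t_i>0$).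
   Context: Here $s$ and $t$ are the prior probabilities with which the states $|\phi\rangle$ and $|\psi\rangle$ are prepared. The paper adopts, throughout, the normalization (obtained by multiplying $|\psi\rangle$ by a global phase) that $\langle\phi|\psi\rangle>0$, and the lemma is proved under the standing case assumption $\sqrt{s/t}\ge\langle\phi|\psi\rangle$. *)

theory Defs
  imports "HOL-Analysis.Analysis"
begin

text \<open>Finite-dimensional complex Hilbert spaces are modelled as complex^'n with 'n finite.
  The inner product is conjugate-linear in the first argument (Dirac convention).\<close>

definition cinner :: "complex ^ 'n \<Rightarrow> complex ^ 'n \<Rightarrow> complex" where
  "cinner x y = (\<Sum>j\<in>UNIV. cnj (x $ j) * y $ j)"

definition tensor :: "complex ^ 'a \<Rightarrow> complex ^ 'b \<Rightarrow> complex ^ ('a \<times> 'b)" where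
  "tensor x y = (\<chi> p. x $ fst p * y $ snd p)"

text \<open>An orthonormal family indexed by 'a in complex^'a (CARD('a) = dim vectors, hence a basis).\<close>
definition orthonormal_basis :: "('a \<Rightarrow> complex ^ 'a) \<Rightarrow> bool" where
  "orthonormal_basis e \<longleftrightarrow> (\<forall>i j. cinner (e i) (e j) = (if i = j then 1 else 0))"

end

theory Submission
  imports Defs
begin

text \<open>
  Put p = \<surd>s \<phi>, q = \<surd>t \<psi> and w = q - p. The hypotheses say that X = \<langle>p|w\<rangle> is real
  and non-positive and that 2X + Y \<ge> 0 for Y = \<langle>w|w\<rangle>. The vector Y p - X w is orthogonal
  to w, so the operator Tr_B |w\<rangle>\<langle>Y p - X w| on H_A is traceless, and every traceless
  matrix has zero diagonal in a suitable orthonormal basis (by convexity of the numerical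
  range and induction, completing each new basis vector by a Householder reflection).
  In such a basis {|i\<rangle>} the slices p_i = \<langle>i|p\<rangle> and w_i = \<langle>i|w\<rangle> satisfy
  Y \<langle>p_i|w_i\<rangle> = X \<langle>w_i|w_i\<rangle>, so each pair of slices satisfies the same sign conditions;
  normalising the slices gives the required decomposition.
\<close>

section \<open>Inner product and orthonormal bases\<close>

lemma cinner_add_left: "cinner (x + y) z = cinner x z + cinner y z"
  by (simp add: cinner_def sum.distrib distrib_right)

lemma cinner_add_right: "cinner x (y + z) = cinner x y + cinner x z"
  by (simp add: cinner_def sum.distrib distrib_left)

lemma cinner_diff_left: "cinner (x - y) z = cinner x z - cinner y z"
  by (simp add: cinner_def sum_subtractf left_diff_distrib)

lemma cinner_diff_right: "cinner x (y - z) = cinner x y - cinner x z"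
  by (simp add: cinner_def sum_subtractf right_diff_distrib)

lemma cinner_minus_left: "cinner (- x) y = - cinner x y"
  by (simp add: cinner_def sum_negf)

lemma cinner_minus_right: "cinner x (- y) = - cinner x y"
  by (simp add: cinner_def sum_negf)

lemma cinner_scale_left: "cinner (c *s x) y = cnj c * cinner x y"
  by (simp add: cinner_def sum_distrib_left mult_ac)

lemma cinner_scale_right: "cinner x (c *s y) = c * cinner x y"
  by (simp add: cinner_def sum_distrib_left mult_ac)

lemma cinner_zero_left [simp]: "cinner 0 x = 0"
  by (simp add: cinner_def)

lemma cinner_zero_right [simp]: "cinner x 0 = 0"
  by (simp add: cinner_def)

lemma cnj_cinner: "cnj (cinner x y) = cinner y x"
  by (simp add: cinner_def mult_ac)

lemma cinner_self: "cinner x x = complex_of_real (\<Sum>j\<in>UNIV. (cmod (x $ j))\<^sup>2)"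
  unfolding cinner_def of_real_sum
  by (intro sum.cong refl) (metis complex_norm_square mult.commute)

lemma cinner_self_real: "complex_of_real (Re (cinner x x)) = cinner x x"
  by (simp add: cinner_self)

lemma Im_cinner_self [simp]: "Im (cinner x x) = 0"
  by (simp add: cinner_self)

lemma cinner_self_nonneg: "0 \<le> Re (cinner x x)"
  by (simp add: cinner_self sum_nonneg)

lemma cinner_self_eq_0_iff: "cinner x x = 0 \<longleftrightarrow> x = 0"
proof
  assume "cinner x x = 0"
  then have "(\<Sum>j\<in>UNIV. (cmod (x $ j))\<^sup>2) = 0"
    unfolding cinner_self of_real_eq_0_iff .
  then show "x = 0"
    by (simp add: sum_nonneg_eq_0_iff vec_eq_iff)
qed simp

lemma cinner_self_pos: "x \<noteq> 0 \<Longrightarrow> 0 < Re (cinner x x)"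
  by (metis cinner_self_eq_0_iff cinner_self_nonneg cinner_self_real less_eq_real_def of_real_0)

lemma cinner_axis_left: "cinner (axis k 1) x = x $ k"
proof -
  have "(\<lambda>j. cnj (axis k 1 $ j) * x $ j) = (\<lambda>j. if j = k then x $ j else 0)"
    by (auto simp: axis_def)
  then show ?thesis
    unfolding cinner_def by (simp only:) simp
qed

lemma orthonormal_basis_complete:
  assumes "orthonormal_basis e"
  shows "(\<Sum>i\<in>UNIV. e i $ j * cnj (e i $ l)) = (if j = l then 1 else 0)"
proof -
  define U :: "complex^'a^'a" where "U = (\<chi> j i. e i $ j)"
  define V :: "complex^'a^'a" where "V = (\<chi> i j. cnj (e i $ j))"
  have "V ** U = mat 1"
    using assms by (simp add: V_def U_def matrix_matrix_mult_def mat_def orthonormal_basis_def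
        cinner_def vec_eq_iff)
  then have "U ** V = mat 1"
    by (rule matrix_left_right_inverse1)
  then show ?thesis
    by (simp add: V_def U_def matrix_matrix_mult_def mat_def vec_eq_iff)
qed

lemma sum_diagonal_orthonormal_basis:
  assumes "orthonormal_basis g"
  shows "(\<Sum>i\<in>UNIV. cinner (g i) (T *v g i)) = trace T"
proof -
  have "(\<Sum>i\<in>UNIV. cinner (g i) (T *v g i)) =
        (\<Sum>i\<in>UNIV. \<Sum>l\<in>UNIV. \<Sum>j\<in>UNIV. T $ l $ j * (g i $ j * cnj (g i $ l)))"
    by (simp add: cinner_def matrix_vector_mult_def sum_distrib_left mult_ac)
  also have "\<dots> = (\<Sum>l\<in>UNIV. \<Sum>j\<in>UNIV. T $ l $ j * (\<Sum>i\<in>UNIV. g i $ j * cnj (g i $ l)))"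
    unfolding sum_distrib_left by (subst sum.swap) (rule sum.cong[OF refl], rule sum.swap)
  also have "\<dots> = trace T"
    by (simp add: orthonormal_basis_complete[OF assms] trace_def if_distrib cong: if_cong)
  finally show ?thesis .
qed

section \<open>Traceless matrices have zero diagonal in some orthonormal basis\<close>

lemma unimodular_phase: "\<exists>\<omega>. cnj \<omega> * \<omega> = 1 \<and> \<omega> * z = complex_of_real (cmod z)"
proof (intro exI conjI)
  show "cnj (cis (- Arg z)) * cis (- Arg z) = 1"
    by (simp add: cis_cnj cis_mult)
  have "cis (- Arg z) * z = cis (- Arg z) * (complex_of_real (cmod z) * cis (Arg z))"
    using rcis_cmod_Arg[of z] by (simp add: rcis_def)
  also have "\<dots> = complex_of_real (cmod z)"
    by (simp add: cis_mult mult.left_commute)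
  finally show "cis (- Arg z) * z = complex_of_real (cmod z)" .
qed

lemma cinner_combination_quadratic:
  "cinner (c *s x + d *s y) (T *v (c *s x + d *s y)) =
     cnj c * c * cinner x (T *v x) + cnj c * d * cinner x (T *v y)
     + cnj d * c * cinner y (T *v x) + cnj d * d * cinner y (T *v y)"
  by (simp add: matrix_vector_right_distrib vector_scalar_commute cinner_add_left cinner_add_right
      cinner_scale_left cinner_scale_right algebra_simps)

lemma numerical_range_segment:
  fixes T :: "complex^'n^'n"
  assumes xx: "cinner x x = 1" and yy: "cinner y y = 1" and xy: "cinner x y = 0"
    and "0 \<le> \<mu>" and "\<mu> \<le> 1"
  shows "\<exists>c d. cinner (c *s x + d *s y) (c *s x + d *s y) = 1 \<and>
    cinner (c *s x + d *s y) (T *v (c *s x + d *s y)) =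
      (1 - complex_of_real \<mu>) * cinner x (T *v x) + complex_of_real \<mu> * cinner y (T *v y)"
proof -
  define p q B C where "p = cinner x (T *v x)" and "q = cinner y (T *v y)"
    and "B = cinner x (T *v y)" and "C = cinner y (T *v x)"
  have yx: "cinner y x = 0"
    using xy cnj_cinner[of x y] by simp
  have norm: "cinner (c *s x + d *s y) (c *s x + d *s y) = cnj c * c + cnj d * d" for c d
    using cinner_combination_quadratic[of c x d y "mat 1"] by (simp add: xx yy xy yx)
  have form: "cinner (c *s x + d *s y) (T *v (c *s x + d *s y)) =
      cnj c * c * p + cnj c * d * B + cnj d * c * C + cnj d * d * q" for c d
    unfolding p_def q_def B_def C_def by (rule cinner_combination_quadratic)
  show ?thesis
  proof (cases "p = q")
    case True
    show ?thesis
      by (rule exI[of _ 1], rule exI[of _ 0])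
        (simp only: norm form flip: p_def q_def, simp add: True algebra_simps)
  next
    case False
    \<comment> \<open>a phase \<omega> on y makes the off-diagonal contribution a real multiple of q - p\<close>
    define B' C' where "B' = B / (q - p)" and "C' = C / (q - p)"
    obtain \<omega> where \<omega>: "cnj \<omega> * \<omega> = 1" and "\<omega> * (B' - cnj C') \<in> \<real>"
      using unimodular_phase by (metis Reals_of_real)
    moreover have "cnj \<omega> * C' = cnj (\<omega> * cnj C')"
      by simp
    ultimately have "\<omega> * B' + cnj \<omega> * C' \<in> \<real>"
      by (simp only: complex_is_Real_iff) (simp add: algebra_simps)
    then obtain r where "\<omega> * B' + cnj \<omega> * C' = complex_of_real r"
      by (auto elim: Reals_cases)
    then have r: "\<omega> * B + cnj \<omega> * C = complex_of_real r * (q - p)"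
      using False unfolding B'_def C'_def by (simp add: divide_eq_eq flip: add_divide_distrib)
    define h where "h = (\<lambda>m::real. m + sqrt (1 - m) * sqrt m * r)"
    have "continuous_on {0..1} h"
      unfolding h_def by (intro continuous_intros)
    moreover have "h 0 \<le> \<mu>" "\<mu> \<le> h 1"
      using assms(4,5) by (simp_all add: h_def)
    ultimately obtain m where "0 \<le> m" "m \<le> 1" "h m = \<mu>"
      using IVT'[of h 0 \<mu> 1] by auto
    define c d where "c = complex_of_real (sqrt (1 - m))" and "d = complex_of_real (sqrt m) * \<omega>"
    have cc: "cnj c * c = complex_of_real (1 - m)" and dd: "cnj d * d = complex_of_real m"
      using \<open>0 \<le> m\<close> \<open>m \<le> 1\<close> \<omega> unfolding c_def d_def
      by (simp_all flip: of_real_mult add: mult_ac)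
    have "cnj c * d * B + cnj d * c * C = complex_of_real (sqrt (1 - m) * sqrt m) * (\<omega> * B + cnj \<omega> * C)"
      unfolding c_def d_def by (simp add: algebra_simps)
    also have "\<dots> = complex_of_real (sqrt (1 - m) * sqrt m * r) * (q - p)"
      by (simp add: r)
    finally have "cnj c * c * p + cnj c * d * B + cnj d * c * C + cnj d * d * q
        = p + complex_of_real (h m) * (q - p)"
      unfolding cc dd h_def by (simp add: algebra_simps)
    then have "cinner (c *s x + d *s y) (T *v (c *s x + d *s y)) =
        (1 - complex_of_real \<mu>) * cinner x (T *v x) + complex_of_real \<mu> * cinner y (T *v y)"
      using \<open>h m = \<mu>\<close> unfolding form p_def q_def by (simp add: algebra_simps)
    moreover have "cinner (c *s x + d *s y) (c *s x + d *s y) = 1"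
      unfolding norm cc dd by simp
    ultimately show ?thesis
      by blast
  qed
qed

lemma numerical_range_average:
  fixes T :: "complex^'n^'n"
  assumes f: "orthonormal_basis f" and "finite F" and "F \<noteq> {}"
  shows "\<exists>x. cinner x x = 1 \<and> (\<forall>i. i \<notin> F \<longrightarrow> cinner x (f i) = 0) \<and>
    of_nat (card F) * cinner x (T *v x) = (\<Sum>i\<in>F. cinner (f i) (T *v f i))"
  using \<open>finite F\<close> \<open>F \<noteq> {}\<close>
proof (induction F rule: finite_ne_induct)
  case (singleton a)
  show ?case
    using f by (intro exI[of _ "f a"]) (simp add: orthonormal_basis_def)
next
  case (insert a F)
  obtain x where xx: "cinner x x = 1" and x_orth: "\<forall>i. i \<notin> F \<longrightarrow> cinner x (f i) = 0"
    and x_sum: "of_nat (card F) * cinner x (T *v x) = (\<Sum>i\<in>F. cinner (f i) (T *v f i))"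
    using insert.IH by blast
  define m where "m = card F"
  have f_unit: "cinner (f i) (f i) = 1" and f_orth: "i \<noteq> j \<Longrightarrow> cinner (f i) (f j) = 0" for i j
    using f by (simp_all add: orthonormal_basis_def)
  have xa: "cinner x (f a) = 0"
    using x_orth insert.hyps by blast
  obtain c d where z_unit: "cinner (c *s x + d *s f a) (c *s x + d *s f a) = 1"
    and z_val: "cinner (c *s x + d *s f a) (T *v (c *s x + d *s f a)) =
      (1 - complex_of_real (1 / (real m + 1))) * cinner x (T *v x)
      + complex_of_real (1 / (real m + 1)) * cinner (f a) (T *v f a)"
    using numerical_range_segment[OF xx f_unit xa, where \<mu> = "1 / (real m + 1)" and T = T] by auto
  have step: "(k + 1) * ((1 - 1 / (k + 1)) * X + 1 / (k + 1) * D) = k * X + D"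
    if "k + 1 \<noteq> 0" for k X D :: complex
    using that unfolding distrib_left mult.assoc[symmetric] right_diff_distrib by simp
  have nonzero: "(of_nat m + 1 :: complex) \<noteq> 0"
    using of_nat_neq_0[of m] by (simp add: add.commute)
  have card: "of_nat (card (insert a F)) = (of_nat m + 1 :: complex)"
    and weight: "complex_of_real (1 / (real m + 1)) = 1 / (of_nat m + 1)"
    using insert.hyps by (simp_all add: m_def)
  have "of_nat (card (insert a F)) * cinner (c *s x + d *s f a) (T *v (c *s x + d *s f a))
      = of_nat m * cinner x (T *v x) + cinner (f a) (T *v f a)"
    unfolding z_val card weight by (rule step[OF nonzero])
  also have "\<dots> = (\<Sum>i\<in>insert a F. cinner (f i) (T *v f i))"
    using insert.hyps by (simp add: x_sum m_def add.commute)
  moreover have "\<forall>i. i \<notin> insert a F \<longrightarrow> cinner (c *s x + d *s f a) (f i) = 0"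
    using x_orth f_orth by (auto simp: cinner_add_left cinner_scale_left)
  ultimately show ?case
    using z_unit by metis
qed

definition reflection :: "complex^'n \<Rightarrow> complex^'n \<Rightarrow> complex^'n" where
  "reflection u v = v - (2 / cinner u u * cinner u v) *s u"

lemma cinner_reflection: "cinner (reflection u v) (reflection u w) = cinner v w"
proof (cases "u = 0")
  case False
  define c where "c = 2 / cinner u u"
  have "cinner u u \<noteq> 0" and "cnj c = c"
    using False cinner_self_eq_0_iff[of u] cnj_cinner[of u u] by (simp_all add: c_def)
  have "cinner (reflection u v) (reflection u w) = cinner v w - c * cinner u w * cinner v u
      - c * cnj (cinner u v) * cinner u w + c * cnj (cinner u v) * c * cinner u w * cinner u u"
    unfolding reflection_def c_def[symmetric]
    by (simp add: cinner_diff_left cinner_diff_right cinner_scale_left cinner_scale_right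
        \<open>cnj c = c\<close> algebra_simps)
  also have "\<dots> = cinner v w"
    using \<open>cinner u u \<noteq> 0\<close> by (simp add: c_def cnj_cinner)
  finally show ?thesis .
qed (simp add: reflection_def)

lemma reflection_orthogonal: "cinner u v = 0 \<Longrightarrow> reflection u v = v"
  by (simp add: reflection_def)

lemma reflection_swap:
  assumes "cinner x x = cinner y y" and "cinner x y \<in> \<real>"
  shows "reflection (x - y) x = y"
proof (cases "x = y")
  case False
  have "cinner y x = cinner x y"
    using assms(2) cnj_cinner[of x y] by (simp add: Reals_cnj_iff)
  then have "cinner (x - y) (x - y) = 2 * cinner (x - y) x"
    using assms(1) by (simp add: cinner_diff_left cinner_diff_right)
  moreover have "cinner (x - y) (x - y) \<noteq> 0"
    using False by (simp add: cinner_self_eq_0_iff)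
  ultimately show ?thesis
    by (simp add: reflection_def)
qed (simp add: reflection_def)

lemma orthonormal_basis_exchange:
  assumes f: "orthonormal_basis f" and "a \<in> J" and x: "cinner x x = 1"
    and x_orth: "\<forall>i. i \<notin> J \<longrightarrow> cinner x (f i) = 0"
  shows "\<exists>f' \<omega>. orthonormal_basis f' \<and> (\<forall>i. i \<notin> J \<longrightarrow> f' i = f i) \<and>
    f' a = \<omega> *s x \<and> cnj \<omega> * \<omega> = 1"
proof -
  obtain \<omega> where \<omega>: "cnj \<omega> * \<omega> = 1"
    and "\<omega> * cinner (f a) x = complex_of_real (cmod (cinner (f a) x))"
    using unimodular_phase by blast
  then have real: "cinner (f a) (\<omega> *s x) \<in> \<real>"
    by (simp add: cinner_scale_right)
  have unit: "cinner (f a) (f a) = cinner (\<omega> *s x) (\<omega> *s x)"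
    using f x \<omega> by (simp add: orthonormal_basis_def cinner_scale_left cinner_scale_right mult.assoc
        mult.commute[of \<omega>])
  define f' where "f' i = reflection (f a - \<omega> *s x) (f i)" for i
  have "orthonormal_basis f'"
    using f by (simp add: orthonormal_basis_def f'_def cinner_reflection)
  moreover have "f' i = f i" if "i \<notin> J" for i
  proof -
    have "i \<noteq> a"
      using that \<open>a \<in> J\<close> by blast
    then show ?thesis
      using f x_orth that unfolding f'_def
      by (intro reflection_orthogonal) (simp add: orthonormal_basis_def cinner_diff_left cinner_scale_left)
  qed
  moreover have "f' a = \<omega> *s x"
    unfolding f'_def by (rule reflection_swap[OF unit real])
  ultimately show ?thesis
    using \<omega> by blast
qed

lemma sum_diagonal_agree_outside:
  assumes "orthonormal_basis f" and "orthonormal_basis g" and "\<forall>i. i \<notin> J \<longrightarrow> g i = f i"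
  shows "(\<Sum>i\<in>J. cinner (g i) (T *v g i)) = (\<Sum>i\<in>J. cinner (f i) (T *v f i))"
proof -
  have split: "sum h UNIV = sum h J + sum h (- J)" for h :: "'a \<Rightarrow> complex"
    using sum.union_disjoint[of J "- J" h] by simp
  have "(\<Sum>i\<in>- J. cinner (g i) (T *v g i)) = (\<Sum>i\<in>- J. cinner (f i) (T *v f i))"
    using assms(3) by (intro sum.cong) auto
  then show ?thesis
    using split[of "\<lambda>i. cinner (f i) (T *v f i)"] split[of "\<lambda>i. cinner (g i) (T *v g i)"]
      sum_diagonal_orthonormal_basis[OF assms(1)] sum_diagonal_orthonormal_basis[OF assms(2)]
    by simp
qed

lemma orthonormal_basis_zero_diagonal_on:
  fixes T :: "complex^'n^'n"
  assumes "finite J" and "orthonormal_basis f" and "(\<Sum>i\<in>J. cinner (f i) (T *v f i)) = 0"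
  shows "\<exists>g. orthonormal_basis g \<and> (\<forall>i\<in>J. cinner (g i) (T *v g i) = 0) \<and>
    (\<forall>i. i \<notin> J \<longrightarrow> g i = f i)"
  using assms
proof (induction J arbitrary: f rule: finite_induct)
  case empty
  then show ?case
    by blast
next
  case (insert a F f)
  let ?diag = "\<lambda>g i. cinner (g i) (T *v g i)"
  obtain x where x_unit: "cinner x x = 1" and x_orth: "\<forall>i. i \<notin> insert a F \<longrightarrow> cinner x (f i) = 0"
    and "of_nat (card (insert a F)) * cinner x (T *v x) = 0"
    using numerical_range_average[OF insert.prems(1), of "insert a F" T] insert.hyps insert.prems(2)
    by auto
  moreover have "card (insert a F) \<noteq> 0"
    using insert.hyps by simp
  ultimately have "cinner x (T *v x) = 0"
    by simp
  obtain f' \<omega> where f': "orthonormal_basis f'"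
    and f'_outside: "\<forall>i. i \<notin> insert a F \<longrightarrow> f' i = f i"
    and "f' a = \<omega> *s x" and "cnj \<omega> * \<omega> = 1"
    using orthonormal_basis_exchange[OF insert.prems(1) insertI1 x_unit x_orth] by blast
  then have f'a: "?diag f' a = 0"
    using \<open>cinner x (T *v x) = 0\<close> by (simp add: vector_scalar_commute cinner_scale_left cinner_scale_right)
  have "sum (?diag f') (insert a F) = 0"
    using sum_diagonal_agree_outside[OF insert.prems(1) f' f'_outside] insert.prems(2) by simp
  then have "sum (?diag f') F = 0"
    using insert.hyps f'a by simp
  then obtain g where "orthonormal_basis g" "\<forall>i\<in>F. ?diag g i = 0"
    and "\<forall>i. i \<notin> F \<longrightarrow> g i = f' i"
    using insert.IH[OF f'] by blast
  then show ?case
    using f'a f'_outside insert.hyps(2) by (intro exI[of _ g]) auto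
qed

theorem traceless_zero_diagonal:
  fixes T :: "complex^'n^'n"
  assumes "trace T = 0"
  shows "\<exists>g. orthonormal_basis g \<and> (\<forall>i. cinner (g i) (T *v g i) = 0)"
proof -
  have std: "orthonormal_basis (\<lambda>i. axis i 1)"
    unfolding orthonormal_basis_def cinner_axis_left by (simp add: axis_def)
  have "(\<Sum>i\<in>UNIV. cinner (axis i 1) (T *v axis i 1)) = 0"
    unfolding sum_diagonal_orthonormal_basis[OF std] by (rule assms)
  then show ?thesis
    using orthonormal_basis_zero_diagonal_on[OF finite std, of T] by blast
qed

section \<open>Slices of bipartite vectors\<close>

definition partial_inner ::
    "complex^'a::finite \<Rightarrow> complex^('a \<times> 'b::finite) \<Rightarrow> complex^'b" where
  \<comment> \<open>(\<langle>e| \<otimes> 1)|p\<rangle>\<close>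
  "partial_inner e p = (\<chi> k. \<Sum>j\<in>UNIV. cnj (e $ j) * p $ (j, k))"

definition partial_gram ::
    "complex^('a::finite \<times> 'b::finite) \<Rightarrow> complex^('a \<times> 'b) \<Rightarrow> complex^'a^'a" where
  \<comment> \<open>the partial trace Tr_B |q\<rangle>\<langle>p|\<close>
  "partial_gram p q = (\<chi> l j. \<Sum>k\<in>UNIV. cnj (p $ (j, k)) * q $ (l, k))"

lemma partial_inner_scale: "partial_inner e (c *s p) = c *s partial_inner e p"
  by (simp add: partial_inner_def vec_eq_iff sum_distrib_left mult_ac)

lemma partial_inner_diff: "partial_inner e (p - q) = partial_inner e p - partial_inner e q"
  by (simp add: partial_inner_def vec_eq_iff sum_subtractf right_diff_distrib)

lemma cinner_partial_inner:
  "cinner (partial_inner e p) (partial_inner e q) = cinner e (partial_gram p q *v e)"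
proof -
  have "cinner (partial_inner e p) (partial_inner e q) =
      (\<Sum>k\<in>UNIV. \<Sum>l\<in>UNIV. \<Sum>j\<in>UNIV. e $ j * cnj (p $ (j, k)) * (cnj (e $ l) * q $ (l, k)))"
    unfolding cinner_def partial_inner_def by (simp add: sum_distrib_left sum_distrib_right)
  also have "\<dots> = (\<Sum>l\<in>UNIV. \<Sum>j\<in>UNIV. \<Sum>k\<in>UNIV.
      e $ j * cnj (p $ (j, k)) * (cnj (e $ l) * q $ (l, k)))"
    by (subst sum.swap) (rule sum.cong[OF refl], rule sum.swap)
  also have "\<dots> = cinner e (partial_gram p q *v e)"
    unfolding cinner_def partial_gram_def matrix_vector_mult_def
    by (simp add: sum_distrib_left sum_distrib_right mult_ac)
  finally show ?thesis .
qed

lemma trace_partial_gram: "trace (partial_gram p q) = cinner p q"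
  unfolding partial_gram_def cinner_def trace_def
  by (simp add: UNIV_Times_UNIV[symmetric] sum.cartesian_product del: UNIV_Times_UNIV)

lemma tensor_scale_right: "tensor x (c *s y) = c *s tensor x y"
  by (simp add: tensor_def vec_eq_iff mult_ac)

lemma sum_tensor_partial_inner:
  assumes "orthonormal_basis g"
  shows "(\<Sum>i\<in>UNIV. tensor (g i) (partial_inner (g i) p)) = p"
proof -
  have "(\<Sum>i\<in>UNIV. tensor (g i) (partial_inner (g i) p)) $ (j, k) = p $ (j, k)" for j k
  proof -
    have "(\<Sum>i\<in>UNIV. tensor (g i) (partial_inner (g i) p)) $ (j, k)
        = (\<Sum>i\<in>UNIV. \<Sum>l\<in>UNIV. p $ (l, k) * (g i $ j * cnj (g i $ l)))"
      unfolding tensor_def partial_inner_def by (simp add: sum_component sum_distrib_left mult_ac)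
    also have "\<dots> = (\<Sum>l\<in>UNIV. p $ (l, k) * (\<Sum>i\<in>UNIV. g i $ j * cnj (g i $ l)))"
      by (subst sum.swap) (simp add: sum_distrib_left)
    also have "\<dots> = p $ (j, k)"
      by (simp add: orthonormal_basis_complete[OF assms] if_distrib cong: if_cong)
    finally show ?thesis .
  qed
  then show ?thesis
    by (simp add: vec_eq_iff)
qed

lemma orthogonal_partial_inner_basis:
  assumes "cinner p q = 0"
  shows "\<exists>g. orthonormal_basis g \<and> (\<forall>i. cinner (partial_inner (g i) p) (partial_inner (g i) q) = 0)"
  using traceless_zero_diagonal[of "partial_gram p q"] assms
  by (simp add: trace_partial_gram cinner_partial_inner)

section \<open>Admissible pairs\<close>

text \<open>
  For p = \<surd>s \<phi> and q = \<surd>t \<psi> the conditions below are the hypotheses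
  \<langle>\<phi>|\<psi>\<rangle> \<le> \<surd>(s/t) and s \<le> t; for the slices of p and q they are the conclusions.
\<close>

definition admissible :: "complex^'n \<Rightarrow> complex^'n \<Rightarrow> bool" where
  "admissible p q \<longleftrightarrow>
     cinner p q \<in> \<real> \<and> Re (cinner p q) \<le> Re (cinner p p) \<and> Re (cinner p p) \<le> Re (cinner q q)"

lemma admissible_add_iff:
  "admissible p (p + w) \<longleftrightarrow>
     cinner p w \<in> \<real> \<and> Re (cinner p w) \<le> 0 \<and> 0 \<le> 2 * Re (cinner p w) + Re (cinner w w)"
proof -
  have "Re (cinner w p) = Re (cinner p w)"
    by (simp flip: cnj_cinner[of p w])
  then show ?thesis
    by (auto simp: admissible_def cinner_add_left cinner_add_right complex_is_Real_iff)
qed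

lemma admissible_if_proportional:
  assumes "X \<le> 0" and "0 \<le> 2 * X + Y" and "0 < Y"
    and balance: "complex_of_real Y * cinner p w = complex_of_real X * cinner w w"
  shows "admissible p (p + w)"
proof -
  have "cinner p w = complex_of_real (X / Y * Re (cinner w w))"
    using balance \<open>0 < Y\<close> by (simp add: cinner_self_real field_simps)
  moreover have "X / Y * Re (cinner w w) \<le> 0"
    using assms(1,3) cinner_self_nonneg[of w] by (simp add: divide_nonpos_pos mult_nonpos_nonneg)
  moreover have "0 \<le> 2 * (X / Y * Re (cinner w w)) + Re (cinner w w)"
  proof -
    have "2 * (X / Y * Re (cinner w w)) + Re (cinner w w) = (2 * X + Y) / Y * Re (cinner w w)"
      using \<open>0 < Y\<close> by (simp add: field_simps)
    then show ?thesis
      using assms(2,3) cinner_self_nonneg[of w] by simp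
  qed
  ultimately show ?thesis
    by (simp add: admissible_add_iff)
qed

lemma admissible_partial_inner_basis:
  fixes p q :: "complex^('a::finite \<times> 'b::finite)"
  assumes "admissible p q"
  shows "\<exists>g. orthonormal_basis g \<and> (\<forall>i. admissible (partial_inner (g i) p) (partial_inner (g i) q))"
proof -
  define w where "w = q - p"
  define X Y where "X = Re (cinner p w)" and "Y = Re (cinner w w)"
  have "cinner p w \<in> \<real>" and "X \<le> 0" and "0 \<le> 2 * X + Y"
    using assms admissible_add_iff[of p w] by (simp_all add: w_def X_def Y_def)
  then have pw: "cinner p w = complex_of_real X" and ww: "cinner w w = complex_of_real Y"
    by (simp_all add: X_def Y_def cinner_self_real complex_is_Real_iff complex_eq_iff)
  \<comment> \<open>Y p - X w is orthogonal to w\<close>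
  obtain g where g: "orthonormal_basis g" and orth:
    "\<forall>i. cinner (partial_inner (g i) (complex_of_real Y *s p - complex_of_real X *s w)) (partial_inner (g i) w) = 0"
    using orthogonal_partial_inner_basis[of "complex_of_real Y *s p - complex_of_real X *s w" w]
    by (auto simp: cinner_diff_left cinner_scale_left pw ww)
  have "admissible (partial_inner (g i) p) (partial_inner (g i) p + partial_inner (g i) w)" for i
  proof (cases "Y = 0")
    case True
    then have "w = 0"
      using ww cinner_self_eq_0_iff by auto
    then have "partial_inner (g i) w = 0"
      by (simp add: partial_inner_def vec_eq_iff)
    then show ?thesis
      by (simp add: admissible_def complex_is_Real_iff)
  next
    case False
    then show ?thesis
      using \<open>X \<le> 0\<close> \<open>0 \<le> 2 * X + Y\<close> cinner_self_nonneg[of w] orth[rule_format, of i]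
      by (intro admissible_if_proportional[of X Y])
        (simp_all add: Y_def partial_inner_diff partial_inner_scale cinner_diff_left cinner_scale_left)
  qed
  then show ?thesis
    using g by (auto simp: w_def partial_inner_diff)
qed

lemma unit_vector_decomposition:
  "\<exists>\<eta>. cinner \<eta> \<eta> = 1 \<and> x = complex_of_real (sqrt (Re (cinner x x))) *s \<eta>"
proof (cases "x = 0")
  case True
  then show ?thesis
    by (intro exI[of _ "axis undefined 1"]) (simp add: cinner_axis_left)
next
  case False
  define n where "n = sqrt (Re (cinner x x))"
  have "0 < n"
    using cinner_self_pos[OF False] by (simp add: n_def)
  have "cinner x x = complex_of_real (n * n)"
    using cinner_self_nonneg[of x] by (simp add: n_def cinner_self_real)
  then have "cinner (complex_of_real (1 / n) *s x) (complex_of_real (1 / n) *s x) = 1"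
    using \<open>0 < n\<close> by (simp add: cinner_scale_left cinner_scale_right flip: of_real_mult)
  moreover have "x = complex_of_real n *s (complex_of_real (1 / n) *s x)"
    using \<open>0 < n\<close> by (simp add: vector_smult_assoc flip: of_real_mult)
  ultimately show ?thesis
    unfolding n_def by blast
qed

lemma admissible_unit_decomposition:
  fixes a b :: "complex^'n"
  assumes "0 < s" and "0 < t"
    and adm: "admissible (complex_of_real (sqrt s) *s a) (complex_of_real (sqrt t) *s b)"
  shows "\<exists>\<eta> \<gamma>. cinner \<eta> \<eta> = 1 \<and> cinner \<gamma> \<gamma> = 1 \<and>
    a = complex_of_real (sqrt (Re (cinner a a))) *s \<eta> \<and>
    b = complex_of_real (sqrt (Re (cinner b b))) *s \<gamma> \<and>
    cinner \<eta> \<gamma> \<in> \<real> \<and> s * Re (cinner a a) \<le> t * Re (cinner b b) \<and>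
    sqrt (t * Re (cinner b b)) * Re (cinner \<eta> \<gamma>) \<le> sqrt (s * Re (cinner a a))"
proof -
  define A B where "A = Re (cinner a a)" and "B = Re (cinner b b)"
  have "complex_of_real (sqrt s * sqrt t) * cinner a b \<in> \<real>"
    and ab_le: "sqrt s * sqrt t * Re (cinner a b) \<le> s * A" and "s * A \<le> t * B"
    using adm \<open>0 < s\<close> \<open>0 < t\<close>
    by (simp_all add: admissible_def cinner_scale_left cinner_scale_right A_def B_def mult_ac)
  then have ab_real: "cinner a b \<in> \<real>"
    using \<open>0 < s\<close> \<open>0 < t\<close> by (simp add: complex_is_Real_iff)
  obtain \<gamma> where \<gamma>: "cinner \<gamma> \<gamma> = 1" "b = complex_of_real (sqrt B) *s \<gamma>"
    using unit_vector_decomposition unfolding B_def by blast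
  show ?thesis
  proof (cases "a = 0")
    case True
    then have "A = 0"
      by (simp add: A_def)
    have "0 \<le> sqrt (t * B)"
      using \<open>0 < t\<close> cinner_self_nonneg[of b] by (simp add: B_def)
    show ?thesis
      unfolding A_def[symmetric] B_def[symmetric]
      by (rule exI[of _ "- \<gamma>"], rule exI[of _ \<gamma>])
        (use True \<gamma> \<open>A = 0\<close> \<open>0 \<le> sqrt (t * B)\<close> \<open>s * A \<le> t * B\<close>
          in \<open>simp add: cinner_minus_left cinner_minus_right\<close>)
  next
    case False
    then have "0 < A"
      unfolding A_def by (rule cinner_self_pos)
    then have "0 < B"
      using \<open>s * A \<le> t * B\<close> \<open>0 < s\<close> \<open>0 < t\<close>
      by (smt (verit) mult_pos_pos zero_less_mult_pos)
    obtain \<eta> where \<eta>: "cinner \<eta> \<eta> = 1" "a = complex_of_real (sqrt A) *s \<eta>"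
      using unit_vector_decomposition unfolding A_def by blast
    then have ab: "cinner a b = complex_of_real (sqrt A * sqrt B) * cinner \<eta> \<gamma>"
      using \<gamma> by (simp add: cinner_scale_left cinner_scale_right)
    then have "cinner \<eta> \<gamma> \<in> \<real>"
      using ab_real \<open>0 < A\<close> \<open>0 < B\<close> by (simp add: complex_is_Real_iff)
    have "sqrt s * sqrt A * (sqrt t * sqrt B * Re (cinner \<eta> \<gamma>)) \<le> sqrt s * sqrt A * (sqrt s * sqrt A)"
      using ab_le \<open>0 < A\<close> \<open>0 < s\<close> by (simp add: ab mult_ac)
    then have bound: "sqrt t * sqrt B * Re (cinner \<eta> \<gamma>) \<le> sqrt s * sqrt A"
      using \<open>0 < A\<close> \<open>0 < s\<close> by (simp add: mult_le_cancel_left_pos)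
    show ?thesis
      unfolding A_def[symmetric] B_def[symmetric]
      by (rule exI[of _ \<eta>], rule exI[of _ \<gamma>])
        (use bound \<eta> \<gamma> \<open>cinner \<eta> \<gamma> \<in> \<real>\<close> \<open>s * A \<le> t * B\<close>
          in \<open>simp add: real_sqrt_mult\<close>)
  qed
qed

lemma admissible_weighted:
  assumes "cinner phi phi = 1" and "cinner psi psi = 1" and "cinner phi psi \<in> \<real>"
    and "0 < s" and "0 < t" and "s \<le> t" and "Re (cinner phi psi) \<le> sqrt (s / t)"
  shows "admissible (complex_of_real (sqrt s) *s phi) (complex_of_real (sqrt t) *s psi)"
proof -
  have "sqrt s * sqrt t * Re (cinner phi psi) \<le> sqrt s * sqrt t * sqrt (s / t)"
    using assms(4,5,7) by simp
  also have "\<dots> = s"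
    using assms(4,5) by (simp add: real_sqrt_divide)
  finally show ?thesis
    using assms by (simp add: admissible_def cinner_scale_left cinner_scale_right complex_is_Real_iff
        mult_ac)
qed

lemma admissible_schmidt_decomposition:
  fixes phi psi :: "complex ^ ('a::finite \<times> 'b::finite)"
  assumes "0 < s" and "0 < t"
    and "admissible (complex_of_real (sqrt s) *s phi) (complex_of_real (sqrt t) *s psi)"
  shows "\<exists>(e :: 'a \<Rightarrow> complex ^ 'a) (si :: 'a \<Rightarrow> real) (ti :: 'a \<Rightarrow> real)
            (eta :: 'a \<Rightarrow> complex ^ 'b) (gam :: 'a \<Rightarrow> complex ^ 'b).
    orthonormal_basis e \<and>
    (\<forall>i. si i \<ge> 0 \<and> ti i \<ge> 0 \<and> cinner (eta i) (eta i) = 1 \<and> cinner (gam i) (gam i) = 1) \<and>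
    phi = (\<Sum>i\<in>UNIV. complex_of_real (sqrt (si i)) *s tensor (e i) (eta i)) \<and>
    psi = (\<Sum>i\<in>UNIV. complex_of_real (sqrt (ti i)) *s tensor (e i) (gam i)) \<and>
    (\<forall>i. cinner (eta i) (gam i) \<in> \<real> \<and> s * si i \<le> t * ti i \<and>
         sqrt (s * si i) \<ge> sqrt (t * ti i) * Re (cinner (eta i) (gam i)))"
proof -
  obtain e where e: "orthonormal_basis e" and adm: "\<forall>i. admissible
      (complex_of_real (sqrt s) *s partial_inner (e i) phi) (complex_of_real (sqrt t) *s partial_inner (e i) psi)"
    using admissible_partial_inner_basis[OF assms(3)]
    by (auto simp: partial_inner_scale)
  define A B where "A i = partial_inner (e i) phi" and "B i = partial_inner (e i) psi" for i
  define si ti where "si i = Re (cinner (A i) (A i))" and "ti i = Re (cinner (B i) (B i))" for i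
  have "\<forall>i. \<exists>\<eta> \<gamma>. cinner \<eta> \<eta> = 1 \<and> cinner \<gamma> \<gamma> = 1 \<and>
      A i = complex_of_real (sqrt (si i)) *s \<eta> \<and> B i = complex_of_real (sqrt (ti i)) *s \<gamma> \<and>
      cinner \<eta> \<gamma> \<in> \<real> \<and> s * si i \<le> t * ti i \<and>
      sqrt (t * ti i) * Re (cinner \<eta> \<gamma>) \<le> sqrt (s * si i)"
    using admissible_unit_decomposition[OF \<open>0 < s\<close> \<open>0 < t\<close>] adm
    unfolding si_def ti_def A_def B_def by blast
  then obtain eta gam where dec: "\<forall>i. cinner (eta i) (eta i) = 1 \<and> cinner (gam i) (gam i) = 1 \<and>
      A i = complex_of_real (sqrt (si i)) *s eta i \<and> B i = complex_of_real (sqrt (ti i)) *s gam i \<and>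
      cinner (eta i) (gam i) \<in> \<real> \<and> s * si i \<le> t * ti i \<and>
      sqrt (t * ti i) * Re (cinner (eta i) (gam i)) \<le> sqrt (s * si i)"
    unfolding choice_iff by blast
  have phi: "phi = (\<Sum>i\<in>UNIV. complex_of_real (sqrt (si i)) *s tensor (e i) (eta i))"
    using sum_tensor_partial_inner[OF e, of phi] dec by (simp add: A_def tensor_scale_right)
  have psi: "psi = (\<Sum>i\<in>UNIV. complex_of_real (sqrt (ti i)) *s tensor (e i) (gam i))"
    using sum_tensor_partial_inner[OF e, of psi] dec by (simp add: B_def tensor_scale_right)
  have nonneg: "si i \<ge> 0 \<and> ti i \<ge> 0" for i
    by (simp add: si_def ti_def cinner_self_nonneg)
  show ?thesis
    by (rule exI[of _ e], rule exI[of _ si], rule exI[of _ ti], rule exI[of _ eta], rule exI[of _ gam])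
      (simp add: e dec phi psi nonneg)
qed

theorem lemma3:
  fixes phi psi :: "complex ^ ('a::finite \<times> 'b::finite)"
    and s t :: real
  assumes "cinner phi phi = 1" and "cinner psi psi = 1"
    and "cinner phi psi \<in> \<real>" and "Re (cinner phi psi) > 0"
    and "s > 0" and "t > 0" and "s + t = 1" and "s \<le> t"
    and "sqrt (s / t) \<ge> Re (cinner phi psi)"
  shows "\<exists>(e :: 'a \<Rightarrow> complex ^ 'a) (si :: 'a \<Rightarrow> real) (ti :: 'a \<Rightarrow> real)
            (eta :: 'a \<Rightarrow> complex ^ 'b) (gam :: 'a \<Rightarrow> complex ^ 'b).
    orthonormal_basis e \<and>
    (\<forall>i. si i \<ge> 0 \<and> ti i \<ge> 0 \<and> cinner (eta i) (eta i) = 1 \<and> cinner (gam i) (gam i) = 1) \<and>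
    phi = (\<Sum>i\<in>UNIV. complex_of_real (sqrt (si i)) *s tensor (e i) (eta i)) \<and>
    psi = (\<Sum>i\<in>UNIV. complex_of_real (sqrt (ti i)) *s tensor (e i) (gam i)) \<and>
    (\<forall>i. cinner (eta i) (gam i) \<in> \<real> \<and> s * si i \<le> t * ti i \<and>
         sqrt (s * si i) \<ge> sqrt (t * ti i) * Re (cinner (eta i) (gam i)))"
  using admissible_schmidt_decomposition[OF assms(5,6) admissible_weighted[OF assms(1-3,5,6,8,9)]] .

end
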